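(* Let $G=(V,E)$ be a tree with boundary with degree sequence $\pi$. Let $(v_1,u_1),(v_2,u_2)\in E$ be edges such that $u_2$ lies on the geodesic path from $v_1$ to $v_2$ but $u_1$ does not. Let $G'=(V,E')$ be obtained by replacing the edges $(v_1,u_1)$ and $(v_2,u_2)$ by the edges $(v_1,v_2)$ and $(u_1,u_2)$. Then $G'$ is a tree with boundary with degree sequence $\pi$ and the same set of boundary vertices as $G$. Moreover, for every function $f:V\to\mathbb{R}$ with $f|_{\partial V}=0$ and $f\not\equiv 0$ satisfying $f(v_1)\ge f(u_2)$ and $f(v_2)\ge f(u_1)$, we have $\mathcal{R}_{G'}(f)\le\mathcal{R}_G(f)$, with strict inequality if both $f(v_1)>f(u_2)$ and $f(v_2)>f(u_1)$.
   Context: A tree with boundary is a finite tree $G=(V,E)$ whose vertex set is partitioned into the set $\partial V$ of boundary vertices, which are exactly the vertices of degree $1$, and the set $V_0$ of interior vertices, which are exactly the vertices of degree at least $2$; both sets are nonempty. Its degree sequence is the multiset of vertex degrees. For a graph $H$ on vertex set $V$ with edge set $E_H$, the Rayleigh quotient of $f:V\to\mathbb{R}$, $f\not\equiv0$, is $\mathcal{R}_H(f)=\sum_{(u,v)\in E_H}(f(u)-f(v))^2\big/\sum_{v\in V}f(v)^2$. *)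

theory Defs
  imports Complex_Main "HOL-Library.Multiset"
begin

definition graph_on :: "'a set \<Rightarrow> 'a set set \<Rightarrow> bool" where
  "graph_on V E \<longleftrightarrow> finite V \<and> (\<forall>e\<in>E. \<exists>u v. e = {u, v} \<and> u \<noteq> v \<and> u \<in> V \<and> v \<in> V)"

definition simple_path :: "'a set \<Rightarrow> 'a set set \<Rightarrow> 'a list \<Rightarrow> 'a \<Rightarrow> 'a \<Rightarrow> bool" where
  "simple_path V E p u v \<longleftrightarrow> p \<noteq> [] \<and> hd p = u \<and> last p = v \<and> distinct p \<and> set p \<subseteq> V \<and>
     (\<forall>i. Suc i < length p \<longrightarrow> {p ! i, p ! Suc i} \<in> E)"

definition is_tree :: "'a set \<Rightarrow> 'a set set \<Rightarrow> bool" where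
  "is_tree V E \<longleftrightarrow> graph_on V E \<and> V \<noteq> {} \<and>
     (\<forall>u\<in>V. \<forall>v\<in>V. \<exists>!p. simple_path V E p u v)"

definition geodesic :: "'a set \<Rightarrow> 'a set set \<Rightarrow> 'a \<Rightarrow> 'a \<Rightarrow> 'a list" where
  "geodesic V E u v = (THE p. simple_path V E p u v)"

definition deg :: "'a set set \<Rightarrow> 'a \<Rightarrow> nat" where
  "deg E v = card {e \<in> E. v \<in> e}"

definition boundary :: "'a set \<Rightarrow> 'a set set \<Rightarrow> 'a set" where
  "boundary V E = {v \<in> V. deg E v = 1}"

definition interior :: "'a set \<Rightarrow> 'a set set \<Rightarrow> 'a set" where
  "interior V E = {v \<in> V. deg E v \<ge> 2}"

definition tree_with_boundary :: "'a set \<Rightarrow> 'a set set \<Rightarrow> bool" where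
  "tree_with_boundary V E \<longleftrightarrow> is_tree V E \<and> V = boundary V E \<union> interior V E \<and>
     boundary V E \<noteq> {} \<and> interior V E \<noteq> {}"

definition degree_sequence :: "'a set \<Rightarrow> 'a set set \<Rightarrow> nat multiset" where
  "degree_sequence V E = image_mset (deg E) (mset_set V)"

definition edge_sq :: "('a \<Rightarrow> real) \<Rightarrow> 'a set \<Rightarrow> real" where
  "edge_sq f e = (THE d. \<exists>u v. e = {u, v} \<and> d = (f u - f v)^2)"

definition rayleigh :: "'a set \<Rightarrow> 'a set set \<Rightarrow> ('a \<Rightarrow> real) \<Rightarrow> real" where
  "rayleigh V E f = (\<Sum>e\<in>E. edge_sq f e) / (\<Sum>v\<in>V. (f v)^2)"

end

theory Submission
  imports Defs
begin

text \<open>A finite graph is a tree iff it is connected and every edge is a bridge. Deleting an edge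
  {a, b} of a tree therefore splits the vertices into the side of a and the side of b, and adding
  any edge between the two sides gives a tree again. The exchange consists of two such moves:
  {v2, u2} is replaced by {v1, v2}, which is legal because the geodesic from v1 to u2 avoids v2;
  then {v1, u1} is replaced by {u1, u2}, which is legal because the geodesic from v1 to v2 avoids
  u1, so that v1, v2 and u2 all lie on the side of v1. Every vertex loses one edge and gains one,
  so degrees are preserved. The numerator of the Rayleigh quotient changes by
  (f v1 - f v2)^2 + (f u1 - f u2)^2 - (f v1 - f u1)^2 - (f v2 - f u2)^2
  = 2 (f v1 - f u2) (f u1 - f v2), which is nonpositive under the hypotheses on f.\<close>

definition adj :: "'a set set \<Rightarrow> ('a \<times> 'a) set" where
  "adj F = {(x, y). {x, y} \<in> F}"

abbreviation conn :: "'a set set \<Rightarrow> 'a \<Rightarrow> 'a \<Rightarrow> bool" where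
  "conn F x y \<equiv> (x, y) \<in> (adj F)\<^sup>*"

definition all_bridges :: "'a set set \<Rightarrow> bool" where
  "all_bridges F \<longleftrightarrow> (\<forall>x y. {x, y} \<in> F \<longrightarrow> \<not> conn (F - {{x, y}}) x y)"

lemma adj_iff [simp]: "(x, y) \<in> adj F \<longleftrightarrow> {x, y} \<in> F"
  by (simp add: adj_def)

lemma conn_sym:
  assumes "conn F x y"
  shows "conn F y x"
proof -
  have "(adj F)\<inverse> = adj F"
    by (auto simp: adj_def insert_commute)
  with assms show ?thesis
    by (metis rtrancl_converseI)
qed

lemma conn_edge: "{x, y} \<in> F \<Longrightarrow> conn F x y"
  by (simp add: r_into_rtrancl)

lemma conn_mono: "F \<subseteq> G \<Longrightarrow> conn F x y \<Longrightarrow> conn G x y"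
  by (metis adj_iff rtrancl_mono subrelI subsetD)

lemma conn_remove_edge:
  assumes "conn F a z"
  shows "conn (F - {{a, b}}) a z \<or> conn (F - {{a, b}}) b z"
  using assms
proof (induction rule: rtrancl_induct)
  case (step y z)
  show ?case
  proof (cases "{y, z} = {a, b}")
    case True
    then show ?thesis by (auto simp: doubleton_eq_iff)
  next
    case False
    with step show ?thesis by (meson DiffI adj_iff rtrancl.rtrancl_into_rtrancl singletonD)
  qed
qed simp

lemma conn_insert_edge:
  assumes "conn (F \<union> {{c, d}}) x y"
  shows "conn F x y \<or> (conn F x c \<and> conn F d y) \<or> (conn F x d \<and> conn F c y)"
  using assms
proof (induction rule: rtrancl_induct)
  case (step y z)
  show ?case
  proof (cases "{y, z} \<in> F")
    case True
    with step.IH show ?thesis by (meson conn_edge rtrancl_trans)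
  next
    case False
    with step.hyps(2) have "(y = c \<and> z = d) \<or> (y = d \<and> z = c)"
      by (auto simp: doubleton_eq_iff)
    with step.IH show ?thesis by (metis conn_sym rtrancl.rtrancl_refl)
  qed
qed simp

lemma graph_onD: "graph_on V F \<Longrightarrow> {x, y} \<in> F \<Longrightarrow> x \<in> V \<and> y \<in> V \<and> x \<noteq> y"
  unfolding graph_on_def by (fastforce simp: doubleton_eq_iff)

lemma graph_on_finite_edges:
  assumes "graph_on V F"
  shows "finite F"
proof -
  have "F \<subseteq> Pow V" using assms by (auto simp: graph_on_def)
  with assms show ?thesis by (auto simp: graph_on_def intro: finite_subset)
qed

lemma simple_path_singleton [simp]: "simple_path V F [x] a b \<longleftrightarrow> x = a \<and> b = a \<and> a \<in> V"
  by (auto simp: simple_path_def)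

lemma simple_path_Cons_Cons:
  "simple_path V F (x # y # p) a b \<longleftrightarrow>
     x = a \<and> a \<in> V \<and> a \<notin> set (y # p) \<and> {a, y} \<in> F \<and> simple_path V F (y # p) y b"
  by (auto simp: simple_path_def nth_Cons split: nat.split)

lemma simple_path_conn: "simple_path V F p a b \<Longrightarrow> conn F a b"
proof (induction p arbitrary: a)
  case (Cons x p)
  show ?case
  proof (cases p)
    case Nil
    with Cons.prems show ?thesis by simp
  next
    case (Cons y p')
    with Cons.prems have "{a, y} \<in> F" "simple_path V F p y b"
      by (simp_all add: simple_path_Cons_Cons)
    with Cons.IH show ?thesis by (meson conn_edge rtrancl_trans)
  qed
qed (simp add: simple_path_def)

lemma conn_imp_simple_path:
  assumes "graph_on V F" "b \<in> V" "conn F a b"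
  shows "\<exists>p. simple_path V F p a b"
  using assms(3)
proof (induction rule: converse_rtrancl_induct)
  case base
  have "simple_path V F [b] b b" using assms(2) by simp
  then show ?case by blast
next
  case (step a z)
  then obtain p where p: "simple_path V F p z b" by blast
  have az: "{a, z} \<in> F" using step.hyps(1) by simp
  show ?case
  proof (cases "a \<in> set p")
    case True
    then obtain k where k: "k < length p" "p ! k = a" by (auto simp: in_set_conv_nth)
    with p have "simple_path V F (drop k p) a b"
      unfolding simple_path_def
      by (auto simp: hd_drop_conv_nth dest: in_set_dropD)
    then show ?thesis by blast
  next
    case False
    have "a \<in> V" using graph_onD[OF assms(1) az] by simp
    moreover obtain p' where "p = z # p'" using p by (cases p) (auto simp: simple_path_def)
    ultimately have "simple_path V F (a # p) a b"
      using False az p by (simp add: simple_path_Cons_Cons)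
    then show ?thesis by blast
  qed
qed

lemma simple_path_Diff_edge:
  "simple_path V F p a b \<Longrightarrow> w \<notin> set p \<Longrightarrow> w \<in> e \<Longrightarrow> simple_path V (F - {e}) p a b"
  unfolding simple_path_def by (metis DiffI Suc_lessD insertE nth_mem singletonD)

lemma simple_path_take:
  assumes "simple_path V F p a b" "k < length p"
  shows "simple_path V F (take (Suc k) p) a (p ! k)"
proof -
  have "length (take (Suc k) p) = Suc k" using assms(2) by simp
  with assms show ?thesis
    unfolding simple_path_def by (auto simp: last_conv_nth dest: in_set_takeD)
qed

lemma simple_path_prefix:
  "simple_path V F (xs @ y # ys) a b \<Longrightarrow> simple_path V F (xs @ [y]) a y"
  using simple_path_take[of V F "xs @ y # ys" a b "length xs"] by simp

lemma simple_path_loop: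
  assumes "simple_path V F p a a"
  shows "p = [a]"
  using assms unfolding simple_path_def
  by (metis distinct.simps(2) last.simps last_in_set list.exhaust_sel)

lemma simple_path_mono: "simple_path V F p a b \<Longrightarrow> F \<subseteq> G \<Longrightarrow> simple_path V G p a b"
  by (auto simp: simple_path_def)

lemma simple_path_unique:
  assumes "all_bridges F"
  shows "simple_path V F p a b \<Longrightarrow> simple_path V F q a b \<Longrightarrow> p = q"
proof (induction p arbitrary: a q)
  case (Cons x p)
  obtain q' where q: "q = a # q'"
    using Cons.prems(2) by (cases q) (auto simp: simple_path_def)
  have x: "x = a" using Cons.prems(1) by (simp add: simple_path_def)
  show ?case
  proof (cases "p = [] \<or> q' = []")
    case True
    with Cons.prems q x have "b = a" by (auto simp: simple_path_def)
    with Cons.prems show ?thesis by (metis simple_path_loop)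
  next
    case False
    then obtain y p' w q'' where p: "p = y # p'" and q': "q' = w # q''"
      by (meson list.exhaust)
    from Cons.prems have y: "{a, y} \<in> F" "a \<notin> set p" "simple_path V F p y b"
      and w: "{a, w} \<in> F" "a \<notin> set q'" "simple_path V F q' w b"
      unfolding x q p q' by (simp_all add: simple_path_Cons_Cons)
    show ?thesis
    proof (cases "y = w")
      case True
      with Cons.IH y(3) w(3) show ?thesis by (simp add: x q)
    next
      case False
      let ?G = "F - {{a, y}}"
      have "conn ?G y b" "conn ?G w b"
        using y w by (meson insertI1 simple_path_Diff_edge simple_path_conn)+
      moreover have "conn ?G a w"
        using w(1) False by (intro conn_edge) (auto simp: doubleton_eq_iff)
      ultimately have "conn ?G a y" by (meson conn_sym rtrancl_trans)
      with y(1) assms show ?thesis by (simp add: all_bridges_def)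
    qed
  qed
qed (simp add: simple_path_def)

lemma is_tree_iff_conn_all_bridges:
  "is_tree V F \<longleftrightarrow> graph_on V F \<and> V \<noteq> {} \<and> (\<forall>x\<in>V. \<forall>y\<in>V. conn F x y) \<and> all_bridges F"
proof
  assume T: "is_tree V F"
  then have g: "graph_on V F" and unique: "\<forall>x\<in>V. \<forall>y\<in>V. \<exists>!p. simple_path V F p x y"
    by (simp_all add: is_tree_def)
  have "all_bridges F"
    unfolding all_bridges_def
  proof (intro allI impI notI)
    fix x y assume e: "{x, y} \<in> F" and "conn (F - {{x, y}}) x y"
    moreover have "graph_on V (F - {{x, y}})" using g by (auto simp: graph_on_def)
    ultimately obtain p where p: "simple_path V (F - {{x, y}}) p x y"
      using conn_imp_simple_path graph_onD[OF g e] by metis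
    have "simple_path V F [x, y] x y"
      using graph_onD[OF g e] e by (simp add: simple_path_Cons_Cons)
    with p unique graph_onD[OF g e] have "p = [x, y]"
      by (metis Diff_subset simple_path_mono)
    with p show False by (simp add: simple_path_Cons_Cons)
  qed
  with T show "graph_on V F \<and> V \<noteq> {} \<and> (\<forall>x\<in>V. \<forall>y\<in>V. conn F x y) \<and> all_bridges F"
    by (metis is_tree_def simple_path_conn)
next
  assume "graph_on V F \<and> V \<noteq> {} \<and> (\<forall>x\<in>V. \<forall>y\<in>V. conn F x y) \<and> all_bridges F"
  then show "is_tree V F"
    unfolding is_tree_def by (metis conn_imp_simple_path simple_path_unique)
qed

lemma is_tree_exchange_edge:
  assumes T: "is_tree V E" and e: "{a, b} \<in> E" and cd: "c \<in> V" "d \<in> V"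
    and sep: "\<not> conn (E - {{a, b}}) c d"
  shows "is_tree V (E - {{a, b}} \<union> {{c, d}})"
proof -
  let ?G = "E - {{a, b}}"
  let ?F = "?G \<union> {{c, d}}"
  from T have g: "graph_on V E" and "V \<noteq> {}" and con: "\<forall>x\<in>V. \<forall>y\<in>V. conn E x y"
    and br: "all_bridges E"
    unfolding is_tree_iff_conn_all_bridges by blast+
  have "c \<noteq> d" using sep by auto
  with g cd have gF: "graph_on V ?F" unfolding graph_on_def by blast
  have GF: "?G \<subseteq> ?F" by blast
  have side: "conn ?G a z \<or> conn ?G b z" if "z \<in> V" for z
    using conn_remove_edge con graph_onD[OF g e] that by metis
  have "\<not> (conn ?G w c \<and> conn ?G w d)" for w
    using sep by (meson conn_sym rtrancl_trans)
  then have "(conn ?G a c \<and> conn ?G b d) \<or> (conn ?G b c \<and> conn ?G a d)"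
    using side[OF cd(1)] side[OF cd(2)] by blast
  then have "conn ?F a b"
    using conn_mono[OF GF] conn_edge[of c d ?F] by (meson UnI2 conn_sym insertI1 rtrancl_trans)
  then have "conn ?F a z" if "z \<in> V" for z
    using side[OF that] conn_mono[OF GF] by (meson rtrancl_trans)
  then have conF: "\<forall>x\<in>V. \<forall>y\<in>V. conn ?F x y"
    by (meson conn_sym rtrancl_trans)
  have "all_bridges ?F"
    unfolding all_bridges_def
  proof (intro allI impI notI)
    fix x y assume xy: "{x, y} \<in> ?F" and cxy: "conn (?F - {{x, y}}) x y"
    show False
    proof (cases "{x, y} = {c, d}")
      case True
      then have "?F - {{x, y}} \<subseteq> ?G" by auto
      with cxy have "conn ?G x y" by (rule conn_mono[rotated])
      with True sep show False by (auto simp: doubleton_eq_iff dest: conn_sym)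
    next
      case False
      let ?H = "?G - {{x, y}}"
      have "?F - {{x, y}} = ?H \<union> {{c, d}}" using False by auto
      with cxy have "conn ?H x y \<or> (conn ?H x c \<and> conn ?H d y) \<or> (conn ?H x d \<and> conn ?H c y)"
        using conn_insert_edge by simp
      moreover have xyG: "{x, y} \<in> ?G" using xy False by simp
      then have "\<not> conn (E - {{x, y}}) x y" using br unfolding all_bridges_def by simp
      moreover have "conn ?H u v \<Longrightarrow> conn (E - {{x, y}}) u v" for u v
        by (rule conn_mono[rotated]) auto
      moreover have "conn ?H u v \<Longrightarrow> conn ?G u v" for u v
        by (rule conn_mono[rotated]) auto
      moreover have "conn ?G x y" using xyG by (rule conn_edge)
      ultimately show False using sep by (meson conn_sym rtrancl_trans)
    qed
  qed
  with gF \<open>V \<noteq> {}\<close> conF show ?thesis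
    by (simp add: is_tree_iff_conn_all_bridges)
qed

lemma geodesic_simple_path:
  "is_tree V E \<Longrightarrow> u \<in> V \<Longrightarrow> v \<in> V \<Longrightarrow> simple_path V E (geodesic V E u v) u v"
  unfolding is_tree_def geodesic_def by (metis theI')

lemma geodesic_conn_avoiding:
  assumes T: "is_tree V E" and "v1 \<in> V" "v2 \<in> V"
    and on_path: "u2 \<in> set (geodesic V E v1 v2)" "u2 \<noteq> v2"
    and not_on_path: "u1 \<notin> set (geodesic V E v1 v2)"
  shows "conn (E - {{v1, u1}}) v1 v2" "conn (E - {{v1, u1}} - {{v2, u2}}) v1 u2"
proof -
  have p: "simple_path V E (geodesic V E v1 v2) v1 v2"
    using assms by (simp add: geodesic_simple_path)
  with not_on_path show "conn (E - {{v1, u1}}) v1 v2"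
    by (meson insertI2 singletonI simple_path_Diff_edge simple_path_conn)
  obtain xs ys where split: "geodesic V E v1 v2 = xs @ u2 # ys"
    using on_path(1) split_list by metis
  with p on_path(2) have "v2 \<in> set ys"
    by (cases ys rule: rev_cases) (auto simp: simple_path_def)
  with p split have "v2 \<notin> set (xs @ [u2])"
    by (auto simp: simple_path_def)
  moreover have "u1 \<notin> set (xs @ [u2])" using not_on_path split by simp
  moreover have "simple_path V E (xs @ [u2]) v1 u2"
    using p split by (simp add: simple_path_prefix)
  ultimately show "conn (E - {{v1, u1}} - {{v2, u2}}) v1 u2"
    by (meson insertI1 insertI2 singletonI simple_path_Diff_edge simple_path_conn)
qed

lemma is_tree_geodesic_exchange:
  assumes T: "is_tree V E" and e1: "{v1, u1} \<in> E" and e2: "{v2, u2} \<in> E"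
    and on_path: "u2 \<in> set (geodesic V E v1 v2)"
    and not_on_path: "u1 \<notin> set (geodesic V E v1 v2)"
    and "u2 \<noteq> v1"
  shows "is_tree V (E - {{v1, u1}, {v2, u2}} \<union> {{v1, v2}, {u1, u2}})"
    and "{v1, v2} \<notin> E" and "{u1, u2} \<notin> E"
proof -
  from T have g: "graph_on V E" and br: "all_bridges E"
    by (simp_all add: is_tree_iff_conn_all_bridges)
  have V: "v1 \<in> V" "u1 \<in> V" "v2 \<in> V" "u2 \<in> V" "u2 \<noteq> v2"
    using graph_onD[OF g e1] graph_onD[OF g e2] by auto
  let ?G = "E - {{v1, u1}} - {{v2, u2}}"
  have v1v2: "conn (E - {{v1, u1}}) v1 v2" and v1u2: "conn ?G v1 u2"
    using geodesic_conn_avoiding[OF T V(1,3) on_path V(5) not_on_path] by simp_all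
  have nb1: "\<not> conn (E - {{v1, u1}}) v1 u1" and nb2: "\<not> conn (E - {{v2, u2}}) v2 u2"
    using br e1 e2 by (simp_all add: all_bridges_def)
  have "?G \<subseteq> E - {{v1, u1}}" "?G \<subseteq> E - {{v2, u2}}" by blast+
  note G_sub = this[THEN conn_mono]
  have sep1: "\<not> conn (E - {{v2, u2}}) v1 v2"
    using nb2 G_sub(2)[OF v1u2] by (meson conn_sym rtrancl_trans)
  let ?E1 = "E - {{v2, u2}} \<union> {{v1, v2}}"
  have T1: "is_tree V ?E1"
    using is_tree_exchange_edge[OF T e2 V(1,3) sep1] .
  have "u1 \<noteq> v2" using not_on_path geodesic_simple_path[OF T V(1,3)]
    by (auto simp: simple_path_def dest: last_in_set)
  then have E1_minus: "?E1 - {{v1, u1}} = ?G \<union> {{v1, v2}}"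
    by (auto simp: doubleton_eq_iff)
  have sep2: "\<not> conn (?E1 - {{v1, u1}}) u1 u2"
  proof
    assume "conn (?E1 - {{v1, u1}}) u1 u2"
    then have "conn ?G u1 u2 \<or> (conn ?G u1 v1 \<and> conn ?G v2 u2) \<or> (conn ?G u1 v2 \<and> conn ?G v1 u2)"
      unfolding E1_minus by (rule conn_insert_edge)
    then have "conn (E - {{v1, u1}}) u1 v1"
      using G_sub(1) v1u2 v1v2 by (meson conn_sym rtrancl_trans)
    with nb1 show False by (simp add: conn_sym)
  qed
  have "{v1, u1} \<in> ?E1"
    using e1 \<open>u2 \<noteq> v1\<close> on_path not_on_path by (auto simp: doubleton_eq_iff)
  moreover have "?E1 - {{v1, u1}} \<union> {{u1, u2}} = E - {{v1, u1}, {v2, u2}} \<union> {{v1, v2}, {u1, u2}}"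
    unfolding E1_minus by blast
  ultimately show "is_tree V (E - {{v1, u1}, {v2, u2}} \<union> {{v1, v2}, {u1, u2}})"
    using is_tree_exchange_edge[OF T1 _ V(2,4) sep2] by simp
  show "{v1, v2} \<notin> E"
    using sep1 \<open>u2 \<noteq> v1\<close> by (auto simp: doubleton_eq_iff intro: conn_edge)
  show "{u1, u2} \<notin> E"
    using nb1 G_sub(1)[OF v1u2] \<open>u2 \<noteq> v1\<close>
    by (metis DiffI conn_edge conn_sym doubleton_eq_iff rtrancl_trans singletonD)
qed

lemma sum_exchange_pair:
  fixes g :: "'b \<Rightarrow> 'c::comm_monoid_add"
  assumes "finite E" "e1 \<in> E" "e2 \<in> E" "e1 \<noteq> e2" "f1 \<notin> E" "f2 \<notin> E" "f1 \<noteq> f2"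
  shows "sum g (E - {e1, e2} \<union> {f1, f2}) + (g e1 + g e2) = sum g E + (g f1 + g f2)"
proof -
  have "sum g E = g e1 + (g e2 + sum g (E - {e1, e2}))"
    using assms
    by (simp add: sum.remove[of E e1] sum.remove[of "E - {e1}" e2] Diff_insert2[symmetric] insert_commute)
  moreover have "sum g (E - {e1, e2} \<union> {f1, f2}) = g f1 + (g f2 + sum g (E - {e1, e2}))"
    using assms by simp
  ultimately show ?thesis by (simp add: ac_simps)
qed

lemma deg_eq_sum: "finite E \<Longrightarrow> deg E z = (\<Sum>e\<in>E. if z \<in> e then 1 else 0)"
  by (simp add: deg_def flip: sum.inter_filter)

lemma deg_exchange:
  assumes "finite E" "{a, b} \<in> E" "{c, d} \<in> E" "{a, c} \<notin> E" "{b, d} \<notin> E"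
    and "a \<noteq> b" "c \<noteq> d" "a \<noteq> c" "b \<noteq> d" "a \<noteq> d"
  shows "deg (E - {{a, b}, {c, d}} \<union> {{a, c}, {b, d}}) = deg E"
proof
  fix z :: 'a
  let ?g = "\<lambda>e. if z \<in> e then 1 else 0 :: nat"
  have "sum ?g (E - {{a, b}, {c, d}} \<union> {{a, c}, {b, d}}) + (?g {a, b} + ?g {c, d}) =
        sum ?g E + (?g {a, c} + ?g {b, d})"
    using assms by (intro sum_exchange_pair) (auto simp: doubleton_eq_iff)
  moreover have "?g {a, b} + ?g {c, d} = ?g {a, c} + ?g {b, d}"
    using assms by auto
  ultimately show "deg (E - {{a, b}, {c, d}} \<union> {{a, c}, {b, d}}) z = deg E z"
    using assms(1) by (simp add: deg_eq_sum)
qed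

lemma edge_sq_doubleton [simp]: "edge_sq f {x, y} = (f x - f y)\<^sup>2"
  unfolding edge_sq_def
proof (rule the_equality)
  fix d assume "\<exists>u v. {x, y} = {u, v} \<and> d = (f u - f v)\<^sup>2"
  then show "d = (f x - f y)\<^sup>2" by (auto simp: doubleton_eq_iff power2_commute)
qed blast

lemma rayleigh_exchange:
  assumes "finite E" "{a, b} \<in> E" "{c, d} \<in> E" "{a, c} \<notin> E" "{b, d} \<notin> E"
    and "a \<noteq> b" "a \<noteq> c" "a \<noteq> d"
  shows "rayleigh V (E - {{a, b}, {c, d}} \<union> {{a, c}, {b, d}}) f =
         rayleigh V E f + 2 * (f a - f d) * (f b - f c) / (\<Sum>v\<in>V. (f v)\<^sup>2)"
proof -
  define N where "N = (\<Sum>e\<in>E. edge_sq f e)"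
  define N' where "N' = (\<Sum>e \<in> E - {{a, b}, {c, d}} \<union> {{a, c}, {b, d}}. edge_sq f e)"
  have "N' + (edge_sq f {a, b} + edge_sq f {c, d}) = N + (edge_sq f {a, c} + edge_sq f {b, d})"
    unfolding N_def N'_def
    using assms by (intro sum_exchange_pair) (auto simp: doubleton_eq_iff)
  moreover have "edge_sq f {a, c} + edge_sq f {b, d} =
      edge_sq f {a, b} + edge_sq f {c, d} + 2 * (f a - f d) * (f b - f c)"
    by (simp add: power2_diff algebra_simps)
  ultimately have "N' = N + 2 * (f a - f d) * (f b - f c)"
    by (simp add: algebra_simps)
  then show ?thesis
    unfolding rayleigh_def N_def[symmetric] N'_def[symmetric] by (simp add: add_divide_distrib)
qed

lemma rayleigh_exchange_le:
  assumes "finite V" "finite E" "{a, b} \<in> E" "{c, d} \<in> E" "{a, c} \<notin> E" "{b, d} \<notin> E"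
    and "a \<noteq> b" "a \<noteq> c" "a \<noteq> d"
    and "\<exists>v\<in>V. f v \<noteq> 0" "f a \<ge> f d" "f c \<ge> f b"
  shows "rayleigh V (E - {{a, b}, {c, d}} \<union> {{a, c}, {b, d}}) f \<le> rayleigh V E f"
    and "f a > f d \<Longrightarrow> f c > f b \<Longrightarrow>
         rayleigh V (E - {{a, b}, {c, d}} \<union> {{a, c}, {b, d}}) f < rayleigh V E f"
proof -
  let ?E' = "E - {{a, b}, {c, d}} \<union> {{a, c}, {b, d}}"
  let ?\<delta> = "2 * (f a - f d) * (f b - f c) / (\<Sum>v\<in>V. (f v)\<^sup>2)"
  have pos: "0 < (\<Sum>v\<in>V. (f v)\<^sup>2)"
    using assms(1,10) sum_nonneg_eq_0_iff[of V "\<lambda>v. (f v)\<^sup>2"] by (auto simp: less_le sum_nonneg)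
  have R: "rayleigh V ?E' f = rayleigh V E f + ?\<delta>"
    by (rule rayleigh_exchange[OF assms(2-9)])
  have "?\<delta> \<le> 0"
    using pos assms(11,12) by (simp add: mult_nonneg_nonpos divide_nonpos_pos)
  with R show "rayleigh V ?E' f \<le> rayleigh V E f" by linarith
  show "rayleigh V ?E' f < rayleigh V E f" if "f a > f d" "f c > f b"
  proof -
    have "?\<delta> < 0" using pos that by (simp add: mult_pos_neg divide_neg_pos)
    with R show ?thesis by linarith
  qed
qed

theorem lemma3:
  fixes V :: "'a set" and E :: "'a set set" and v1 u1 v2 u2 :: 'a
  assumes G: "tree_with_boundary V E"
    and e1: "{v1, u1} \<in> E" and e2: "{v2, u2} \<in> E"
    and on_path: "u2 \<in> set (geodesic V E v1 v2)"
    and not_on_path: "u1 \<notin> set (geodesic V E v1 v2)"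
  defines "E' \<equiv> (E - {{v1, u1}, {v2, u2}}) \<union> {{v1, v2}, {u1, u2}}"
  shows "tree_with_boundary V E' \<and> degree_sequence V E' = degree_sequence V E \<and>
         boundary V E' = boundary V E \<and>
         (\<forall>f :: 'a \<Rightarrow> real.
            (\<forall>v\<in>boundary V E. f v = 0) \<and> (\<exists>v\<in>V. f v \<noteq> 0) \<and>
            f v1 \<ge> f u2 \<and> f v2 \<ge> f u1 \<longrightarrow>
              rayleigh V E' f \<le> rayleigh V E f \<and>
              (f v1 > f u2 \<and> f v2 > f u1 \<longrightarrow> rayleigh V E' f < rayleigh V E f))"
proof (cases "u2 = v1")
  case True
  with e1 e2 have "E' = E" by (auto simp: E'_def insert_commute)
  with G True show ?thesis by simp
next
  case False
  from G have T: "is_tree V E" and g: "graph_on V E"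
    by (simp_all add: tree_with_boundary_def is_tree_def)
  then have fin: "finite V" "finite E"
    using graph_on_finite_edges by (auto simp: graph_on_def)
  from is_tree_geodesic_exchange[OF T e1 e2 on_path not_on_path False]
  have T': "is_tree V E'" and new: "{v1, v2} \<notin> E" "{u1, u2} \<notin> E"
    unfolding E'_def by simp_all
  have "v1 \<noteq> u1" "v2 \<noteq> u2" using graph_onD[OF g] e1 e2 by auto
  moreover have "v1 \<noteq> v2" "u1 \<noteq> u2"
    using T' graph_onD[of V E'] by (auto simp: is_tree_def E'_def)
  ultimately have "deg E' = deg E"
    using deg_exchange[OF fin(2) e1 e2 new] False unfolding E'_def by auto
  then have "boundary V E' = boundary V E" "interior V E' = interior V E"
    "degree_sequence V E' = degree_sequence V E"
    by (simp_all add: boundary_def interior_def degree_sequence_def)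
  with G T' show ?thesis
    using rayleigh_exchange_le[OF fin e1 e2 new \<open>v1 \<noteq> u1\<close> \<open>v1 \<noteq> v2\<close>] False
    by (simp add: tree_with_boundary_def E'_def)
qed

end
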